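(* Let $P$ be the program NQUEENS. Then $\mathcal{M}_P\subseteq S$; that is, NQUEENS is correct with respect to $S=S_{pq}\cup S_{pqs}$. In fact $S$ is a Herbrand model of NQUEENS: for every ground instance $H\gets B_1,\dots,B_n$ ($n\ge0$) of a clause of NQUEENS, if $B_1,\dots,B_n\in S$ then $H\in S$.
   Context: Terms are built over a fixed alphabet containing the constant $0$, the unary symbol $s$, the list constant $[\,]$ and the binary list constructor $[\cdot|\cdot]$; $\mathcal{HU}$ is the set of ground terms and $\mathcal{HB}$ the set of ground atoms. A natural number $i$ is identified with the term $s^i(0)$. Prolog list notation is used: $[e_1,\dots,e_n|e]$ stands for $e$ when $n=0$, and a list of length $n$ is a term $[e_1,\dots,e_n]$. A term $e$ is the $k$-th member of a term $t$ ($k\ge 1$) if $t=[e_1,\dots,e_{k-1},e|e']$ for some terms $e_1,\dots,e_{k-1},e'$; $e$ is a member of $t$ if it is its $k$-th member for some $k$. A list of distinct members is a list whose elements are pairwise distinct. The program NQUEENS consists of the definite clauses (capitalized names are variables): (C1) $pqs(0,X_1,X_2,X_3)$. (C2) $pqs(s(I),Cs,Us,[X|Ds]) \gets pqs(I,Cs,[Y|Us],Ds),\ pq(s(I),Cs,Us,Ds)$. (C3) $pq(I,[I|X_1],[I|X_2],[I|X_3])$. (C4) $pq(I,[X_1|Cs],[X_2|Us],[X_3|Ds]) \gets pq(I,Cs,Us,Ds)$. $\mathcal{M}_P$ denotes the least Herbrand model of a program $P$. If a number $j$ is the $k$-th member of a list $cs$, the up-diagonal number of $j$ w.r.t. $i$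 in $cs$ is $k+j-i$ and the down-diagonal number is $k+i-j$. A triple $(cs,us,ds)$ of terms is correct up to $m$ w.r.t. $i$ when $0\le m\le i$ and: $cs$ is a list of distinct members and each $j\in\{1,\dots,m\}$ is a member of $cs$; the up-diagonal numbers of $1,\dots,m$ in $cs$ are pairwise distinct, and likewise the down-diagonal numbers; and for each $j\in\{1,\dots,m\}$, if the up-diagonal (resp. down-diagonal) number of $j$ w.r.t. $i$ in $cs$ is $l>0$, then the $l$-th member of $us$ (resp. $ds$) is $j$. Specifications: $S_{pq}=\{pq(i,[c_1,\dots,c_k,i|c],[u_1,\dots,u_k,i|u],[d_1,\dots,d_k,i|d])\in\mathcal{HB}\mid k\ge0\}$; $S_{pqs}=\{pqs(0,cs,us,ds)\mid cs,us,ds\in\mathcal{HU}\}\cup\{pqs(i,cs,us,[t|ds])\in\mathcal{HB}\mid i>0$ a natural number, $1,\dots,i$ are members of $cs$, and if $cs$ is a list of distinct members then $(cs,us,ds)$ is correct up to $i$ w.r.t. $i\}$; $S=S_{pq}\cup S_{pqs}$. *)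

theory Defs
  imports Main
begin

datatype gterm = Zero | Suc_t gterm | Nil_t | Cons_t gterm gterm

datatype gatom = Pqs gterm gterm gterm gterm | Pq gterm gterm gterm gterm

fun nat_t :: "nat \<Rightarrow> gterm" where
  "nat_t 0 = Zero"
| "nat_t (Suc n) = Suc_t (nat_t n)"

text \<open>Prolog list notation [e1,...,en|e].\<close>
definition mk_list :: "gterm list \<Rightarrow> gterm \<Rightarrow> gterm" where
  "mk_list es e = foldr Cons_t es e"

definition kth_member :: "nat \<Rightarrow> gterm \<Rightarrow> gterm \<Rightarrow> bool" where
  "kth_member k e t \<longleftrightarrow> k \<ge> 1 \<and> (\<exists>es e'. length es = k - 1 \<and> t = mk_list (es @ [e]) e')"

definition member_t :: "gterm \<Rightarrow> gterm \<Rightarrow> bool" where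
  "member_t e t \<longleftrightarrow> (\<exists>k. kth_member k e t)"

definition distinct_list_t :: "gterm \<Rightarrow> bool" where
  "distinct_list_t t \<longleftrightarrow> (\<exists>es. t = mk_list es Nil_t \<and> distinct es)"

text \<open>Up-diagonal number k + j - i and down-diagonal number k + i - j (integers),
  where j is the k-th member of cs.\<close>
definition correct_upto :: "gterm \<Rightarrow> gterm \<Rightarrow> gterm \<Rightarrow> nat \<Rightarrow> nat \<Rightarrow> bool" where
  "correct_upto cs us ds m i \<longleftrightarrow>
     m \<le> i \<and>
     distinct_list_t cs \<and>
     (\<forall>j\<in>{1..m}. member_t (nat_t j) cs) \<and>
     (\<forall>j1\<in>{1..m}. \<forall>j2\<in>{1..m}. \<forall>k1 k2.
        j1 \<noteq> j2 \<and> kth_member k1 (nat_t j1) cs \<and> kth_member k2 (nat_t j2) cs \<longrightarrow>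
          int k1 + int j1 - int i \<noteq> int k2 + int j2 - int i) \<and>
     (\<forall>j1\<in>{1..m}. \<forall>j2\<in>{1..m}. \<forall>k1 k2.
        j1 \<noteq> j2 \<and> kth_member k1 (nat_t j1) cs \<and> kth_member k2 (nat_t j2) cs \<longrightarrow>
          int k1 + int i - int j1 \<noteq> int k2 + int i - int j2) \<and>
     (\<forall>j\<in>{1..m}. \<forall>k. kth_member k (nat_t j) cs \<longrightarrow>
        (\<forall>l::nat. int l = int k + int j - int i \<and> l > 0 \<longrightarrow> kth_member l (nat_t j) us) \<and>
        (\<forall>l::nat. int l = int k + int i - int j \<and> l > 0 \<longrightarrow> kth_member l (nat_t j) ds))"

definition S_pq :: "gatom set" where
  "S_pq = {Pq i (mk_list cs (Cons_t i c)) (mk_list us (Cons_t i u)) (mk_list ds (Cons_t i d))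
           | i c u d cs us ds. length cs = length us \<and> length us = length ds}"

definition S_pqs :: "gatom set" where
  "S_pqs = {Pqs Zero cs us ds | cs us ds. True} \<union>
           {Pqs (nat_t i) cs us (Cons_t t ds) | i cs us t ds.
              i > 0 \<and> (\<forall>j\<in>{1..i}. member_t (nat_t j) cs) \<and>
              (distinct_list_t cs \<longrightarrow> correct_upto cs us ds i i)}"

definition S_spec :: "gatom set" where
  "S_spec = S_pq \<union> S_pqs"

text \<open>Ground instances (head, body) of clauses C1--C4: all variables replaced by ground terms.\<close>
inductive_set nqueens_ground :: "(gatom \<times> gatom list) set" where
  C1: "(Pqs Zero x1 x2 x3, []) \<in> nqueens_ground"
| C2: "(Pqs (Suc_t i) cs us (Cons_t x ds),
        [Pqs i cs (Cons_t y us) ds, Pq (Suc_t i) cs us ds]) \<in> nqueens_ground"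
| C3: "(Pq i (Cons_t i x1) (Cons_t i x2) (Cons_t i x3), []) \<in> nqueens_ground"
| C4: "(Pq i (Cons_t x1 cs) (Cons_t x2 us) (Cons_t x3 ds), [Pq i cs us ds]) \<in> nqueens_ground"

definition herbrand_model :: "gatom set \<Rightarrow> bool" where
  "herbrand_model I \<longleftrightarrow> (\<forall>H B. (H, B) \<in> nqueens_ground \<and> set B \<subseteq> I \<longrightarrow> H \<in> I)"

definition least_herbrand_model :: "gatom set" where
  "least_herbrand_model = \<Inter>{I. herbrand_model I}"

end

theory Submission
  imports Defs
begin

(* S is a model, hence contains the least model. The pq atoms in S are exactly those whose
   first argument sits at one common position k in the other three lists, which is obviously
   preserved by C3 and C4. For C2, the body pq(s(i),Cs,Us,Ds) puts queen i+1 at a position k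
   of Cs, Us and [X|Ds], so both its diagonal numbers are k. Passing from i to i+1 lowers every
   up-diagonal number by one and raises every down-diagonal number by one, which is matched by
   the body pqs using [Y|Us] and the head using [X|Ds]; so the old queens stay recorded. No old
   queen shares a diagonal with the new one, since otherwise two different numbers would be
   recorded at position k of Us or of [X|Ds]. *)

lemma mk_list_Nil [simp]: "mk_list [] e = e"
  by (simp add: mk_list_def)

lemma mk_list_Cons [simp]: "mk_list (a # es) e = Cons_t a (mk_list es e)"
  by (simp add: mk_list_def)

lemma mk_list_append_singleton: "mk_list (es @ [a]) e = mk_list es (Cons_t a e)"
  by (simp add: mk_list_def)

lemma nat_t_inject [simp]: "nat_t m = nat_t n \<longleftrightarrow> m = n"
proof (induction m arbitrary: n)
  case 0 then show ?case by (cases n) auto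
next
  case (Suc m) then show ?case by (cases n) auto
qed

lemma kth_member_iff_mk_list:
  "kth_member k e t \<longleftrightarrow> (\<exists>es c. k = Suc (length es) \<and> t = mk_list es (Cons_t e c))"
proof
  assume "kth_member k e t"
  then obtain es c where "k \<ge> 1" "length es = k - 1" "t = mk_list es (Cons_t e c)"
    unfolding kth_member_def mk_list_append_singleton by blast
  then show "\<exists>es c. k = Suc (length es) \<and> t = mk_list es (Cons_t e c)"
    by (intro exI[of _ es] exI[of _ c]) auto
next
  assume "\<exists>es c. k = Suc (length es) \<and> t = mk_list es (Cons_t e c)"
  then show "kth_member k e t"
    unfolding kth_member_def mk_list_append_singleton by auto
qed

lemma kth_member_0 [simp]: "\<not> kth_member 0 e t"
  by (simp add: kth_member_def)

lemma kth_member_Cons: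
  "kth_member k e (Cons_t a t) \<longleftrightarrow> (k = 1 \<and> e = a) \<or> (k > 1 \<and> kth_member (k - 1) e t)"
  unfolding kth_member_iff_mk_list
proof (intro iffI; elim disjE conjE exE)
  fix es c assume "k = Suc (length es)" "Cons_t a t = mk_list es (Cons_t e c)"
  then show "(k = 1 \<and> e = a) \<or> (k > 1 \<and> (\<exists>es c. k - 1 = Suc (length es) \<and> t = mk_list es (Cons_t e c)))"
    by (cases es) auto
next
  assume "k = 1" "e = a"
  then show "\<exists>es c. k = Suc (length es) \<and> Cons_t a t = mk_list es (Cons_t e c)"
    by (intro exI[of _ "[]"]) auto
next
  fix es c assume "k > 1" "k - 1 = Suc (length es)" "t = mk_list es (Cons_t e c)"
  then show "\<exists>es c. k = Suc (length es) \<and> Cons_t a t = mk_list es (Cons_t e c)"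
    by (intro exI[of _ "a # es"]) auto
qed

lemma kth_member_Suc_Cons: "kth_member k e t \<Longrightarrow> kth_member (Suc k) e (Cons_t a t)"
  by (cases k) (simp_all add: kth_member_Cons)

lemma kth_member_obtain_Cons:
  assumes "kth_member k e t"
  obtains a t' where "t = Cons_t a t'"
proof -
  from assms obtain es c where "t = mk_list es (Cons_t e c)"
    unfolding kth_member_iff_mk_list by blast
  then show thesis using that by (cases es) auto
qed

lemma kth_member_Nil_t [simp]: "\<not> kth_member k e Nil_t"
  by (metis kth_member_obtain_Cons gterm.distinct(11))

lemma kth_member_functional: "kth_member k e t \<Longrightarrow> kth_member k e' t \<Longrightarrow> e = e'"
proof (induction k arbitrary: t)
  case 0 then show ?case by simp
next
  case (Suc k)
  then obtain a t' where "t = Cons_t a t'" by (blast elim: kth_member_obtain_Cons)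
  with Suc show ?case by (auto simp: kth_member_Cons)
qed

lemma kth_member_mk_list_Nil:
  "kth_member k e (mk_list es Nil_t) \<longleftrightarrow> 0 < k \<and> k \<le> length es \<and> es ! (k - 1) = e"
proof (induction es arbitrary: k)
  case Nil then show ?case by (simp; linarith)
next
  case (Cons a es)
  show ?case
  proof (cases k)
    case 0 then show ?thesis by simp
  next
    case (Suc m) then show ?thesis by (cases m) (auto simp: kth_member_Cons Cons.IH)
  qed
qed

lemma kth_member_distinct_list_unique:
  assumes "distinct_list_t t" "kth_member k e t" "kth_member k' e t"
  shows "k = k'"
proof -
  from assms(1) obtain es where "t = mk_list es Nil_t" "distinct es"
    unfolding distinct_list_t_def by blast
  with assms(2,3) show ?thesis by (auto simp: kth_member_mk_list_Nil nth_eq_iff_index_eq)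
qed

lemma Pq_in_S_spec_iff:
  "Pq i cs us ds \<in> S_spec \<longleftrightarrow> (\<exists>k. kth_member k i cs \<and> kth_member k i us \<and> kth_member k i ds)"
proof
  assume "Pq i cs us ds \<in> S_spec"
  then obtain cs' us' ds' c u d where
    "cs = mk_list cs' (Cons_t i c)" "us = mk_list us' (Cons_t i u)" "ds = mk_list ds' (Cons_t i d)"
    "length cs' = length us'" "length us' = length ds'"
    unfolding S_spec_def S_pq_def S_pqs_def by blast
  then show "\<exists>k. kth_member k i cs \<and> kth_member k i us \<and> kth_member k i ds"
    unfolding kth_member_iff_mk_list by metis
next
  assume "\<exists>k. kth_member k i cs \<and> kth_member k i us \<and> kth_member k i ds"
  then obtain cs' us' ds' c u d where
    "cs = mk_list cs' (Cons_t i c)" "us = mk_list us' (Cons_t i u)" "ds = mk_list ds' (Cons_t i d)"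
    "length cs' = length us'" "length us' = length ds'"
    unfolding kth_member_iff_mk_list by (metis Suc_inject)
  then show "Pq i cs us ds \<in> S_spec"
    unfolding S_spec_def S_pq_def by blast
qed

(* d k j is the diagonal number of queen j standing at position k of cs:
   k + j - i for up-diagonals, k + i - j for down-diagonals. *)
definition diagonals_distinct :: "gterm \<Rightarrow> nat \<Rightarrow> (nat \<Rightarrow> nat \<Rightarrow> int) \<Rightarrow> bool" where
  "diagonals_distinct cs m d \<longleftrightarrow>
     (\<forall>j1\<in>{1..m}. \<forall>j2\<in>{1..m}. \<forall>k1 k2.
        j1 \<noteq> j2 \<and> kth_member k1 (nat_t j1) cs \<and> kth_member k2 (nat_t j2) cs \<longrightarrow> d k1 j1 \<noteq> d k2 j2)"

definition diagonals_recorded :: "gterm \<Rightarrow> nat \<Rightarrow> (nat \<Rightarrow> nat \<Rightarrow> int) \<Rightarrow> gterm \<Rightarrow> bool" where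
  "diagonals_recorded cs m d ts \<longleftrightarrow>
     (\<forall>j\<in>{1..m}. \<forall>k. kth_member k (nat_t j) cs \<longrightarrow>
        (\<forall>l. int l = d k j \<and> l > 0 \<longrightarrow> kth_member l (nat_t j) ts))"

lemma correct_upto_iff:
  "correct_upto cs us ds m i \<longleftrightarrow>
     m \<le> i \<and> distinct_list_t cs \<and> (\<forall>j\<in>{1..m}. member_t (nat_t j) cs) \<and>
     diagonals_distinct cs m (\<lambda>k j. int k + int j - int i) \<and>
     diagonals_distinct cs m (\<lambda>k j. int k + int i - int j) \<and>
     diagonals_recorded cs m (\<lambda>k j. int k + int j - int i) us \<and>
     diagonals_recorded cs m (\<lambda>k j. int k + int i - int j) ds"
  unfolding correct_upto_def diagonals_distinct_def diagonals_recorded_def by blast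

lemma correct_upto_0: "distinct_list_t cs \<Longrightarrow> correct_upto cs us ds 0 0"
  by (simp add: correct_upto_def)

lemma diagonals_distinct_shift:
  "(\<And>k j. d' k j = d k j + c) \<Longrightarrow> diagonals_distinct cs m d' \<longleftrightarrow> diagonals_distinct cs m d"
  by (simp add: diagonals_distinct_def)

lemma diagonals_recorded_tail:
  assumes "diagonals_recorded cs m d (Cons_t a ts)"
  shows "diagonals_recorded cs m (\<lambda>k j. d k j - 1) ts"
  unfolding diagonals_recorded_def
proof (intro ballI allI impI)
  fix j k l
  assume "j \<in> {1..m}" "kth_member k (nat_t j) cs" "int l = d k j - 1 \<and> l > 0"
  with assms have "kth_member (Suc l) (nat_t j) (Cons_t a ts)"
    unfolding diagonals_recorded_def by auto
  with \<open>int l = d k j - 1 \<and> l > 0\<close> show "kth_member l (nat_t j) ts"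
    by (simp add: kth_member_Cons)
qed

lemma diagonals_recorded_Cons:
  assumes "diagonals_recorded cs m d ts"
    and pos: "\<And>j k. j \<in> {1..m} \<Longrightarrow> kth_member k (nat_t j) cs \<Longrightarrow> d k j > 0"
  shows "diagonals_recorded cs m (\<lambda>k j. d k j + 1) (Cons_t a ts)"
  unfolding diagonals_recorded_def
proof (intro ballI allI impI)
  fix j k l
  assume j: "j \<in> {1..m}" and k: "kth_member k (nat_t j) cs" and l: "int l = d k j + 1 \<and> l > 0"
  with assms(1) have "kth_member (l - 1) (nat_t j) ts"
    unfolding diagonals_recorded_def using pos by fastforce
  moreover have "l > 1" using l pos[OF j k] by linarith
  ultimately show "kth_member l (nat_t j) (Cons_t a ts)"
    by (simp add: kth_member_Cons)
qed

lemma diagonals_recorded_Suc: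
  assumes old: "diagonals_recorded cs m d ts" and dist: "distinct_list_t cs"
    and k: "kth_member k (nat_t (Suc m)) cs" and dk: "d k (Suc m) = int k"
    and ts: "kth_member k (nat_t (Suc m)) ts"
  shows "diagonals_recorded cs (Suc m) d ts"
  unfolding diagonals_recorded_def
proof (intro ballI allI impI)
  fix j k' l
  assume j: "j \<in> {1..Suc m}" and k': "kth_member k' (nat_t j) cs" and l: "int l = d k' j \<and> l > 0"
  show "kth_member l (nat_t j) ts"
  proof (cases "j = Suc m")
    case True
    with k' have "k' = k" using kth_member_distinct_list_unique[OF dist _ k] by simp
    with True l dk ts show ?thesis by simp
  next
    case False
    with j k' l old show ?thesis unfolding diagonals_recorded_def by auto
  qed
qed

lemma diagonals_distinct_Suc:
  assumes old: "diagonals_distinct cs m d" and rec: "diagonals_recorded cs (Suc m) d ts"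
    and dist: "distinct_list_t cs" and k: "kth_member k (nat_t (Suc m)) cs"
    and dk: "d k (Suc m) = int k"
  shows "diagonals_distinct cs (Suc m) d"
proof -
  have "k > 0" using k by (cases k) simp_all
  then have ts: "kth_member k (nat_t (Suc m)) ts"
    using rec k dk unfolding diagonals_recorded_def by (auto simp del: nat_t.simps)
  have new: "d k' j \<noteq> d k (Suc m)" if j: "j \<in> {1..m}" and k': "kth_member k' (nat_t j) cs" for j k'
  proof
    assume "d k' j = d k (Suc m)"
    with rec j k' dk \<open>k > 0\<close> have "kth_member k (nat_t j) ts"
      unfolding diagonals_recorded_def by auto
    from kth_member_functional[OF this ts] j show False by (simp del: nat_t.simps)
  qed
  have unique: "k' = k" if "kth_member k' (nat_t (Suc m)) cs" for k'
    using kth_member_distinct_list_unique[OF dist that k] .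
  show ?thesis
    unfolding diagonals_distinct_def
  proof (intro ballI allI impI)
    fix j1 j2 k1 k2
    assume j1: "j1 \<in> {1..Suc m}" and j2: "j2 \<in> {1..Suc m}"
      and h: "j1 \<noteq> j2 \<and> kth_member k1 (nat_t j1) cs \<and> kth_member k2 (nat_t j2) cs"
    consider "j1 \<in> {1..m}" "j2 \<in> {1..m}" | "j1 = Suc m" "j2 \<in> {1..m}" | "j2 = Suc m" "j1 \<in> {1..m}"
      using j1 j2 h by fastforce
    then show "d k1 j1 \<noteq> d k2 j2"
    proof cases
      case 1 with old h show ?thesis unfolding diagonals_distinct_def by blast
    next
      case 2
      with h unique have "k1 = k" by simp
      with 2 h new[of j2 k2] show ?thesis by metis
    next
      case 3
      with h unique have "k2 = k" by simp
      with 3 h new[of j1 k1] show ?thesis by metis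
    qed
  qed
qed

lemma members_upto_Suc:
  "\<forall>j\<in>{1..i}. member_t (nat_t j) cs \<Longrightarrow> kth_member k (nat_t (Suc i)) cs \<Longrightarrow>
   \<forall>j\<in>{1..Suc i}. member_t (nat_t j) cs"
  by (auto simp: member_t_def le_Suc_eq simp del: nat_t.simps)

lemma correct_upto_Suc:
  assumes old: "correct_upto cs (Cons_t y us) ds i i"
    and kc: "kth_member k (nat_t (Suc i)) cs"
    and ku: "kth_member k (nat_t (Suc i)) us"
    and kd: "kth_member k (nat_t (Suc i)) (Cons_t t ds)"
  shows "correct_upto cs us (Cons_t t ds) (Suc i) (Suc i)"
proof -
  define up where "up = (\<lambda>k j. int k + int j - int (Suc i))"
  define down where "down = (\<lambda>k j. int k + int (Suc i) - int j)"
  from old have dist: "distinct_list_t cs"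
    and members: "\<forall>j\<in>{1..i}. member_t (nat_t j) cs"
    and up_distinct: "diagonals_distinct cs i (\<lambda>k j. up k j + 1)"
    and down_distinct: "diagonals_distinct cs i (\<lambda>k j. down k j - 1)"
    and up_recorded: "diagonals_recorded cs i (\<lambda>k j. up k j + 1) (Cons_t y us)"
    and down_recorded: "diagonals_recorded cs i (\<lambda>k j. down k j - 1) ds"
    unfolding correct_upto_iff up_def down_def by (simp_all add: algebra_simps)
  have "diagonals_recorded cs i up us"
    using diagonals_recorded_tail[OF up_recorded] by simp
  then have up_recorded': "diagonals_recorded cs (Suc i) up us"
    using diagonals_recorded_Suc[OF _ dist kc _ ku] by (simp add: up_def)
  have down_pos: "down k' j - 1 > 0" if "j \<in> {1..i}" "kth_member k' (nat_t j) cs" for j k'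
    using that by (auto simp: down_def kth_member_def)
  have "diagonals_recorded cs i down (Cons_t t ds)"
    using diagonals_recorded_Cons[OF down_recorded down_pos] by simp
  then have down_recorded': "diagonals_recorded cs (Suc i) down (Cons_t t ds)"
    using diagonals_recorded_Suc[OF _ dist kc _ kd] by (simp add: down_def)
  have "diagonals_distinct cs i up"
    using up_distinct diagonals_distinct_shift[of "\<lambda>k j. up k j + 1" up 1] by simp
  then have up_distinct': "diagonals_distinct cs (Suc i) up"
    using diagonals_distinct_Suc[OF _ up_recorded' dist kc] by (simp add: up_def)
  have "diagonals_distinct cs i down"
    using down_distinct diagonals_distinct_shift[of "\<lambda>k j. down k j - 1" down "-1"] by simp
  then have down_distinct': "diagonals_distinct cs (Suc i) down"
    using diagonals_distinct_Suc[OF _ down_recorded' dist kc] by (simp add: down_def)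
  show ?thesis
    using dist members_upto_Suc[OF members kc] up_distinct' down_distinct' up_recorded' down_recorded'
    unfolding correct_upto_iff up_def down_def by blast
qed

lemma Pqs_Cons_in_S_spec_iff:
  "Pqs (nat_t i) cs us (Cons_t t ds) \<in> S_spec \<longleftrightarrow>
     (\<forall>j\<in>{1..i}. member_t (nat_t j) cs) \<and> (distinct_list_t cs \<longrightarrow> correct_upto cs us ds i i)"
proof (cases i)
  case 0 then show ?thesis by (simp add: S_spec_def S_pqs_def correct_upto_0)
next
  case (Suc n)
  then have "nat_t i \<noteq> Zero" by simp
  with Suc show ?thesis by (auto simp: S_spec_def S_pq_def S_pqs_def simp del: nat_t.simps)
qed

lemma Pqs_in_S_spec_nat_t:
  assumes "Pqs i cs us ds \<in> S_spec"
  obtains n where "i = nat_t n"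
proof -
  from assms have "i = Zero \<or> (\<exists>n. i = nat_t n)"
    unfolding S_spec_def S_pq_def S_pqs_def by blast
  then show thesis using that by (metis nat_t.simps(1))
qed

lemma S_spec_closed_pqs_step:
  assumes pqs: "Pqs i cs (Cons_t y us) ds \<in> S_spec" and pq: "Pq (Suc_t i) cs us ds \<in> S_spec"
  shows "Pqs (Suc_t i) cs us (Cons_t x ds) \<in> S_spec"
proof -
  obtain n where n: "i = nat_t n" using pqs by (rule Pqs_in_S_spec_nat_t)
  obtain k where kc: "kth_member k (nat_t (Suc n)) cs" and ku: "kth_member k (nat_t (Suc n)) us"
    and kd: "kth_member k (nat_t (Suc n)) ds"
    using pq n by (auto simp: Pq_in_S_spec_iff)
  obtain t ds' where ds: "ds = Cons_t t ds'" using kd by (rule kth_member_obtain_Cons)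
  from pqs have "\<forall>j\<in>{1..n}. member_t (nat_t j) cs"
    and "distinct_list_t cs \<longrightarrow> correct_upto cs (Cons_t y us) ds' n n"
    unfolding n ds Pqs_Cons_in_S_spec_iff by blast+
  with kc ku kd have "\<forall>j\<in>{1..Suc n}. member_t (nat_t j) cs"
    and "distinct_list_t cs \<longrightarrow> correct_upto cs us ds (Suc n) (Suc n)"
    using members_upto_Suc correct_upto_Suc[of cs y us ds' n k t] unfolding ds by blast+
  then have "Pqs (nat_t (Suc n)) cs us (Cons_t x ds) \<in> S_spec"
    unfolding Pqs_Cons_in_S_spec_iff by blast
  then show ?thesis by (simp add: n)
qed

lemma herbrand_model_S_spec: "herbrand_model S_spec"
  unfolding herbrand_model_def
proof (intro allI impI, elim conjE)
  fix H B assume "(H, B) \<in> nqueens_ground" and body: "set B \<subseteq> S_spec"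
  then show "H \<in> S_spec"
  proof cases
    case C1 then show ?thesis by (simp add: S_spec_def S_pqs_def)
  next
    case C2 with body show ?thesis by (auto intro: S_spec_closed_pqs_step)
  next
    case C3 then show ?thesis by (auto simp: Pq_in_S_spec_iff kth_member_Cons)
  next
    case (C4 i x1 cs x2 us x3 ds)
    with body obtain k where "kth_member k i cs" "kth_member k i us" "kth_member k i ds"
      by (auto simp: Pq_in_S_spec_iff)
    with C4 show ?thesis by (auto simp: Pq_in_S_spec_iff intro!: exI[of _ "Suc k"] kth_member_Suc_Cons)
  qed
qed

theorem mainTheorem2:
  shows "least_herbrand_model \<subseteq> S_spec \<and>
         (\<forall>H B. (H, B) \<in> nqueens_ground \<and> (\<forall>b\<in>set B. b \<in> S_spec) \<longrightarrow> H \<in> S_spec)"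
proof
  show "least_herbrand_model \<subseteq> S_spec"
    unfolding least_herbrand_model_def using herbrand_model_S_spec by blast
  show "\<forall>H B. (H, B) \<in> nqueens_ground \<and> (\<forall>b\<in>set B. b \<in> S_spec) \<longrightarrow> H \<in> S_spec"
    using herbrand_model_S_spec unfolding herbrand_model_def by blast
qed

end
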